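(* Let $n\ge1$, $X=\{1,\dots,n\}$, $\mathcal{A}$ the algebra of all functions $X\to\mathbb{R}$ with pointwise operations, $\sigma:X\to X$ a bijection and $\tilde{\sigma}(f)=f\circ\sigma^{-1}$. The centralizer of $\mathcal{A}$ in the skew power series ring $\mathcal{A}[[x;\tilde{\sigma}]]$ is $$C(\mathcal{A})=\Big\{\sum_{n=0}^{\infty} f_nx^n : f_n\in\mathcal{A},\ f_n=0\text{ on } Sep^n(X)\text{ for all } n\ge0\Big\}.$$
   Context: The skew power series ring $\mathcal{A}[[x;\tilde{\sigma}]]$ is the set of formal series $\sum_{n=0}^\infty f_nx^n$, $f_n\in\mathcal{A}$, with coefficientwise addition and multiplication $\big(\sum_n f_nx^n\big)\big(\sum_n g_nx^n\big)=\sum_{n}\big(\sum_{k=0}^n f_k\,\tilde{\sigma}^k(g_{n-k})\big)x^n$ (so $xf=\tilde{\sigma}(f)x$). For an integer $n$, $Sep^n(X)=\{p\in X:\sigma^n(p)\neq p\}$ (so $Sep^0(X)=\emptyset$). *)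

theory Defs
  imports Complex_Main
begin

definition sigma_tilde :: "('x \<Rightarrow> 'x) \<Rightarrow> ('x \<Rightarrow> real) \<Rightarrow> ('x \<Rightarrow> real)" where
  "sigma_tilde s f = f \<circ> inv s"

text \<open>Skew power series sum_n f_n x^n represented by the coefficient sequence.\<close>
type_synonym 'x skew_series = "nat \<Rightarrow> ('x \<Rightarrow> real)"

definition skew_mult :: "('x \<Rightarrow> 'x) \<Rightarrow> 'x skew_series \<Rightarrow> 'x skew_series \<Rightarrow> 'x skew_series" where
  "skew_mult s F G = (\<lambda>n. \<lambda>p. \<Sum>k\<in>{0..n}. F k p * ((sigma_tilde s ^^ k) (G (n - k))) p)"

definition const_series :: "('x \<Rightarrow> real) \<Rightarrow> 'x skew_series" where
  "const_series f = (\<lambda>n. if n = 0 then f else (\<lambda>_. 0))"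

definition skew_centralizer :: "('x \<Rightarrow> 'x) \<Rightarrow> 'x skew_series set" where
  "skew_centralizer s = {F. \<forall>f. skew_mult s F (const_series f) = skew_mult s (const_series f) F}"

definition Sep :: "('x \<Rightarrow> 'x) \<Rightarrow> nat \<Rightarrow> 'x set" where
  "Sep s n = {p. (s ^^ n) p \<noteq> p}"

end

theory Submission
  imports Defs
begin

text \<open>Multiplying a series F by a constant f on the left scales each coefficient F n by f;
  multiplying on the right scales it by f \<circ> (inv \<sigma>)^n, because x^n f = sigma_tilde^n(f) x^n.
  Testing against indicator functions shows that F commutes with every constant iff F n vanishes
  wherever (inv \<sigma>)^n moves a point. For a bijection, (inv \<sigma>)^n and \<sigma>^n have the same fixed
  points, and the points moved by \<sigma>^n form Sep \<sigma> n.\<close>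

lemma funpow_sigma_tilde: "(sigma_tilde s ^^ k) g = g \<circ> (inv s ^^ k)"
proof (induction k)
  case (Suc k)
  then show ?case by (simp add: sigma_tilde_def funpow_swap1)
qed simp

lemma skew_mult_const_series_right:
  "skew_mult s F (const_series f) n p = F n p * f ((inv s ^^ n) p)"
proof -
  have "skew_mult s F (const_series f) n p =
      (\<Sum>k\<in>{0..n}. if k = n then F n p * f ((inv s ^^ n) p) else 0)"
    unfolding skew_mult_def
    by (intro sum.cong) (auto simp: funpow_sigma_tilde const_series_def)
  then show ?thesis by simp
qed

lemma skew_mult_const_series_left:
  "skew_mult s (const_series f) F n p = f p * F n p"
proof -
  have "skew_mult s (const_series f) F n p = (\<Sum>k\<in>{0..n}. if k = 0 then f p * F n p else 0)"
    unfolding skew_mult_def by (intro sum.cong) (auto simp: const_series_def)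
  then show ?thesis by simp
qed

lemma skew_centralizer_iff:
  "F \<in> skew_centralizer s \<longleftrightarrow> (\<forall>n p. (inv s ^^ n) p \<noteq> p \<longrightarrow> F n p = 0)"
proof
  assume F: "F \<in> skew_centralizer s"
  show "\<forall>n p. (inv s ^^ n) p \<noteq> p \<longrightarrow> F n p = 0"
  proof (intro allI impI)
    fix n p
    assume moved: "(inv s ^^ n) p \<noteq> p"
    define f where "f = (\<lambda>q. if q = p then 1 else 0 :: real)"
    have "skew_mult s F (const_series f) n p = skew_mult s (const_series f) F n p"
      using F unfolding skew_centralizer_def by simp
    then have "F n p * f ((inv s ^^ n) p) = f p * F n p"
      by (simp only: skew_mult_const_series_right skew_mult_const_series_left)
    with moved show "F n p = 0" by (simp add: f_def)
  qed
next
  assume "\<forall>n p. (inv s ^^ n) p \<noteq> p \<longrightarrow> F n p = 0"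
  then have "skew_mult s F (const_series f) n p = skew_mult s (const_series f) F n p" for f n p
    by (cases "(inv s ^^ n) p = p")
      (auto simp: skew_mult_const_series_right skew_mult_const_series_left)
  then show "F \<in> skew_centralizer s"
    unfolding skew_centralizer_def by (simp add: fun_eq_iff)
qed

lemma funpow_inv_fixed_iff:
  assumes "bij s"
  shows "(inv s ^^ n) p = p \<longleftrightarrow> (s ^^ n) p = p"
  using bij_inv_eq_iff[OF bij_fn[OF assms], of p n p] by (auto simp: inv_fn[OF assms])

theorem theorem10:
  fixes \<sigma> :: "'x::finite \<Rightarrow> 'x"
  assumes "bij \<sigma>"
  shows "skew_centralizer \<sigma> = {F. \<forall>n. \<forall>p \<in> Sep \<sigma> n. F n p = 0}"
  using funpow_inv_fixed_iff[OF assms]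
  by (auto simp: skew_centralizer_iff Sep_def)

end
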